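(* Consider the system $x(t+1)=Ax(t)+Bu_S(t)$, $y_S(t)=Cx(t)+Du_S(t)$ with $x(t)\in\mathbb{R}^n$, $u_S(t)\in\mathbb{R}^m$, $y_S(t)\in\mathbb{R}^p$, under the attack model $u_S(t)=w(t)$, $y(t)=y_S(t)+a(t)$ (controller-designed input equal to zero), where at most $r$ inputs and at most $s$ outputs are attacked. Suppose $(A,B,C,D)$ is $(2r,2s)$-sparse strongly observable. Let $t\ge n-1$ and let $\Gamma_u\subseteq\{1,\dots,m\}$, $\Gamma_y\subseteq\{1,\dots,p\}$ with $|\Gamma_u|\le r$ and $|\Gamma_y|\ge p-s$. If there exist $\hat{\mathbf{U}}\in\mathbb{R}^{n|\Gamma_u|}$ and $\hat x\in\mathbb{R}^n$ such that $$\mathbf{Y}|_{\Gamma_y}(t)=\mathcal{O}_{\Gamma_y}\hat x+\mathcal{N}_{\Gamma_u\to\Gamma_y}\hat{\mathbf{U}},$$ then $\hat x=x(t-n+1)$.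
   Context: The adversarial signals $w(t)\in\mathbb{R}^m$, $a(t)\in\mathbb{R}^p$ are arbitrary except that there exist fixed unknown sets $\Gamma_u^*\subseteq\{1,\dots,m\}$, $|\Gamma_u^*|\le r$, and $\Lambda^*\subseteq\{1,\dots,p\}$, $|\Lambda^*|\le s$, with $w(t)$ supported in $\Gamma_u^*$ and $a(t)$ supported in $\Lambda^*$ for all $t$. (Standing assumption of the paper's observer design: the known controller-designed input is taken to be zero, its effect having been subtracted from the outputs.) Notation: for $\Theta\subseteq\{1,\dots,p\}$, $\mathbf{Y}|_{\Theta}(t)$ is the stacked vector $[\,y(t-n+1)|_\Theta^T\ \cdots\ y(t)|_\Theta^T\,]^T$, where $y(k)|_\Theta$ keeps only the entries of $y(k)$ indexed by $\Theta$. $\mathcal{O}_{\Theta}=\begin{bmatrix}C_\Theta^T & A^TC_\Theta^T & \cdots & (A^T)^{n-1}C_\Theta^T\end{bmatrix}^T$ with $C_\Theta=C|_{(\Theta,\cdot)}$ (rows of $C$ indexed by $\Theta$). For $\Gamma\subseteq\{1,\dots,m\}$, $\mathcal{N}_{\Gamma\to\Theta}$ is the block lower-triangular Toeplitz matrix with $n$ block rows and $n$ block columns whose diagonal blocks are $D_{\Theta\Gamma}=D|_{(\Theta,\Gamma)}$ and whose $(i,j)$ block for $i>j$ is $C_\Theta A^{i-j-1}B_\Gamma$, with $B_\Gamma=B|_{(\cdot,\Gamma)}$ (columns of $B$ indexed by $\Gamma$). Subsystem $(A,B|_{(\cdot,\Gamma)},C|_{(\Theta,\cdot)},D|_{(\Theta,\Gamma)})$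 keeps the inputs in $\Gamma$ and outputs in $\Theta$. A system is strongly observable if for any initial state and any input sequence there exists $\tau$ such that the initial state is uniquely determined by $y(0),\dots,y(\tau)$ (any initial state producing the same outputs under some input sequence is equal to it). The system is $(r',s')$-sparse strongly observable if every subsystem with input set $\Gamma$, $|\Gamma|\le r'$, and output set $\Theta$, $|\Theta|\ge p-s'$, is strongly observable. *)

theory Defs
  imports Complex_Main
begin

text \<open>Real vectors are functions nat => real (only the entries with index below the
dimension matter); real matrices are functions nat => nat => real.
The product of a matrix M with a vector x, summing only over the column index set S,
is the product of the column-submatrix M|(.,S) with x|S.\<close>

definition mvs :: "nat set \<Rightarrow> (nat \<Rightarrow> nat \<Rightarrow> real) \<Rightarrow> (nat \<Rightarrow> real) \<Rightarrow> nat \<Rightarrow> real" where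
  "mvs S M x i = (\<Sum>j\<in>S. M i j * x j)"

definition mmul :: "nat \<Rightarrow> (nat \<Rightarrow> nat \<Rightarrow> real) \<Rightarrow> (nat \<Rightarrow> nat \<Rightarrow> real) \<Rightarrow> nat \<Rightarrow> nat \<Rightarrow> real" where
  "mmul k M N i j = (\<Sum>l<k. M i l * N l j)"

fun mpow :: "nat \<Rightarrow> (nat \<Rightarrow> nat \<Rightarrow> real) \<Rightarrow> nat \<Rightarrow> nat \<Rightarrow> nat \<Rightarrow> real" where
  "mpow n A 0 = (\<lambda>i j. if i = j then 1 else 0)"
| "mpow n A (Suc k) = mmul n A (mpow n A k)"

fun state :: "(nat \<Rightarrow> nat \<Rightarrow> real) \<Rightarrow> (nat \<Rightarrow> nat \<Rightarrow> real) \<Rightarrow> nat \<Rightarrow> nat \<Rightarrow>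
    (nat \<Rightarrow> real) \<Rightarrow> (nat \<Rightarrow> nat \<Rightarrow> real) \<Rightarrow> nat \<Rightarrow> nat \<Rightarrow> real" where
  "state A B n m x0 u 0 = x0"
| "state A B n m x0 u (Suc t) =
     (\<lambda>i. mvs {..<n} A (state A B n m x0 u t) i + mvs {..<m} B (u t) i)"

definition outp :: "(nat \<Rightarrow> nat \<Rightarrow> real) \<Rightarrow> (nat \<Rightarrow> nat \<Rightarrow> real) \<Rightarrow> (nat \<Rightarrow> nat \<Rightarrow> real) \<Rightarrow>
    (nat \<Rightarrow> nat \<Rightarrow> real) \<Rightarrow> nat \<Rightarrow> nat \<Rightarrow> (nat \<Rightarrow> real) \<Rightarrow> (nat \<Rightarrow> nat \<Rightarrow> real) \<Rightarrow> nat \<Rightarrow> nat \<Rightarrow> real" where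
  "outp A B C D n m x0 u t i =
     mvs {..<n} C (state A B n m x0 u t) i + mvs {..<m} D (u t) i"

text \<open>Strong observability of the subsystem (A, B|(.,Gamma), C|(Theta,.), D|(Theta,Gamma)):
inputs of the subsystem are exactly input sequences supported in Gamma, and only the
outputs indexed by Theta are observed.\<close>
definition strongly_observable_sub ::
  "(nat \<Rightarrow> nat \<Rightarrow> real) \<Rightarrow> (nat \<Rightarrow> nat \<Rightarrow> real) \<Rightarrow> (nat \<Rightarrow> nat \<Rightarrow> real) \<Rightarrow>
   (nat \<Rightarrow> nat \<Rightarrow> real) \<Rightarrow> nat \<Rightarrow> nat \<Rightarrow> nat set \<Rightarrow> nat set \<Rightarrow> bool" where
  "strongly_observable_sub A B C D n m \<Gamma> \<Theta> \<longleftrightarrow>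
     (\<forall>x0 u. (\<forall>t j. j \<notin> \<Gamma> \<longrightarrow> u t j = 0) \<longrightarrow>
       (\<exists>\<tau>. \<forall>x0' u'. (\<forall>t j. j \<notin> \<Gamma> \<longrightarrow> u' t j = 0) \<longrightarrow>
          (\<forall>k\<le>\<tau>. \<forall>i\<in>\<Theta>. outp A B C D n m x0' u' k i = outp A B C D n m x0 u k i) \<longrightarrow>
          (\<forall>i<n. x0' i = x0 i)))"

definition sparse_strongly_observable ::
  "(nat \<Rightarrow> nat \<Rightarrow> real) \<Rightarrow> (nat \<Rightarrow> nat \<Rightarrow> real) \<Rightarrow> (nat \<Rightarrow> nat \<Rightarrow> real) \<Rightarrow>
   (nat \<Rightarrow> nat \<Rightarrow> real) \<Rightarrow> nat \<Rightarrow> nat \<Rightarrow> nat \<Rightarrow> nat \<Rightarrow> nat \<Rightarrow> bool" where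
  "sparse_strongly_observable A B C D n m p r' s' \<longleftrightarrow>
     (\<forall>\<Gamma> \<Theta>. \<Gamma> \<subseteq> {..<m} \<longrightarrow> card \<Gamma> \<le> r' \<longrightarrow> \<Theta> \<subseteq> {..<p} \<longrightarrow> p - s' \<le> card \<Theta> \<longrightarrow>
        strongly_observable_sub A B C D n m \<Gamma> \<Theta>)"

text \<open>Block k (k = 0..n-1) of the observability matrix: C A^k (rows later restricted to Theta).\<close>
definition obs_block :: "nat \<Rightarrow> (nat \<Rightarrow> nat \<Rightarrow> real) \<Rightarrow> (nat \<Rightarrow> nat \<Rightarrow> real) \<Rightarrow> nat \<Rightarrow> nat \<Rightarrow> nat \<Rightarrow> real" where
  "obs_block n A C k = mmul n C (mpow n A k)"

text \<open>Block (k,j) of the block lower-triangular Toeplitz matrix N: D on the diagonal,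
C A^(k-j-1) B below, zero above (columns later restricted to Gamma, rows to Theta).\<close>
definition toep_block :: "nat \<Rightarrow> (nat \<Rightarrow> nat \<Rightarrow> real) \<Rightarrow> (nat \<Rightarrow> nat \<Rightarrow> real) \<Rightarrow> (nat \<Rightarrow> nat \<Rightarrow> real) \<Rightarrow>
    (nat \<Rightarrow> nat \<Rightarrow> real) \<Rightarrow> nat \<Rightarrow> nat \<Rightarrow> nat \<Rightarrow> nat \<Rightarrow> real" where
  "toep_block n A B C D k j =
     (if j = k then D else if j < k then mmul n C (mmul n (mpow n A (k - j - 1)) B) else (\<lambda>_ _. 0))"

text \<open>Block row k of the equation  Y|Theta(t) = O_Theta xh + N_{Gamma->Theta} U,
where block row k refers to time t-n+1+k, xh in R^n and U = (U 0, ..., U (n-1)),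
each U j indexed by Gamma.\<close>
definition stacked_eq ::
  "nat \<Rightarrow> (nat \<Rightarrow> nat \<Rightarrow> real) \<Rightarrow> (nat \<Rightarrow> nat \<Rightarrow> real) \<Rightarrow> (nat \<Rightarrow> nat \<Rightarrow> real) \<Rightarrow>
   (nat \<Rightarrow> nat \<Rightarrow> real) \<Rightarrow> (nat \<Rightarrow> nat \<Rightarrow> real) \<Rightarrow> nat \<Rightarrow> nat set \<Rightarrow> nat set \<Rightarrow>
   (nat \<Rightarrow> real) \<Rightarrow> (nat \<Rightarrow> nat \<Rightarrow> real) \<Rightarrow> bool" where
  "stacked_eq n A B C D y t \<Gamma> \<Theta> xh U \<longleftrightarrow>
     (\<forall>k<n. \<forall>i\<in>\<Theta>.
        y (Suc t - n + k) i =
          mvs {..<n} (obs_block n A C k) xh i + (\<Sum>j<n. mvs \<Gamma> (toep_block n A B C D k j) (U j) i))"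

end

theory Submission
  imports Defs "HOL-Library.Function_Algebras"
begin

(* Put z = x(t-n+1) - xh and let e be the true input minus U (extended by zero outside Gamma_u).
   By linearity, e is supported in Gamma_u union Gamma_u* and (z, e) produces zero output on
   Gamma_y - Lambda* during n steps. These index sets have at most 2r and at least p - 2s
   elements, so the corresponding subsystem is strongly observable, and it remains to see that
   then n steps of zero output already force z = 0.
   The initial states admitting zero output for k steps under some admissible input form a
   decreasing chain W_k of subspaces of R^n. Since W_(k+1) is determined by W_k, the chain is
   constant after its first stationary step, which occurs by step n for dimension reasons.
   Strong observability of the zero trajectory gives a horizon tau with W_(tau+1) = 0, hence
   W_n = 0. *)

context vector_space
begin

(* dim is 0 on spaces without a finite basis, hence the hypothesis T \<subseteq> span E. *)
lemma dim_less_if_psubset: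
  assumes "subspace S" "S \<subset> T" "T \<subseteq> span E" "finite E"
  shows "dim S < dim T"
proof -
  obtain BS where BS: "BS \<subseteq> S" "independent BS" "S \<subseteq> span BS" "card BS = dim S"
    using basis_exists by blast
  obtain BT where BT: "BT \<subseteq> T" "independent BT" "T \<subseteq> span BT" "card BT = dim T"
    using basis_exists by blast
  have "finite BT"
    using independent_span_bound[OF assms(4) BT(2)] BT(1) assms(3) by blast
  obtain v where v: "v \<in> T" "v \<notin> S"
    using assms(2) by blast
  then have "v \<notin> span BS"
    using span_minimal[OF BS(1) assms(1)] by blast
  then have "independent (insert v BS)"
    using independent_insertI BS(2) by blast
  moreover have "insert v BS \<subseteq> span BT"
    using BS(1) BT(3) assms(2) v(1) by blast
  ultimately have "finite (insert v BS) \<and> card (insert v BS) \<le> card BT"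
    by (rule independent_span_bound[OF \<open>finite BT\<close>])
  moreover have "v \<notin> BS"
    using BS(1) v(2) by blast
  ultimately show ?thesis
    using BS(4) BT(4) by auto
qed

lemma decreasing_subspace_chain_stabilizes:
  assumes "\<And>k. subspace (W k)" "\<And>k. W (Suc k) \<subseteq> W k" "W 0 \<subseteq> span E" "finite E"
  shows "\<exists>k\<le>card E. W (Suc k) = W k"
proof (rule ccontr)
  assume "\<not> ?thesis"
  then have strict: "W (Suc k) \<subset> W k" if "k \<le> card E" for k
    using assms(2) that by blast
  have span: "W k \<subseteq> span E" for k
    by (induction k) (use assms(2,3) in blast)+
  have "dim (W k) + k \<le> card E" if "k \<le> Suc (card E)" for k
    using that
  proof (induction k)
    case 0
    then show ?case using dim_le_card[OF assms(3,4)] by simp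
  next
    case (Suc k)
    then have "dim (W (Suc k)) < dim (W k)"
      using dim_less_if_psubset[OF assms(1) strict span assms(4)] by simp
    with Suc show ?case by simp
  qed
  from this[of "Suc (card E)"] show False by simp
qed

end

interpretation real_fun: vector_space "\<lambda>(c::real) (x::nat \<Rightarrow> real) i. c * x i"
  by unfold_locales (auto simp: fun_eq_iff algebra_simps)

abbreviation supported_in :: "nat set \<Rightarrow> (nat \<Rightarrow> nat \<Rightarrow> real) \<Rightarrow> bool" where
  "supported_in \<Gamma> u \<equiv> \<forall>\<tau> j. j \<notin> \<Gamma> \<longrightarrow> u \<tau> j = 0"

definition vec_trunc :: "nat \<Rightarrow> (nat \<Rightarrow> real) \<Rightarrow> nat \<Rightarrow> real" where
  "vec_trunc n x i = (if i < n then x i else 0)"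

lemma mvs_lincomb: "mvs S M (\<lambda>j. a * x j + b * y j) i = a * mvs S M x i + b * mvs S M y i"
  by (simp add: mvs_def sum.distrib sum_distrib_left algebra_simps)

lemma mvs_cong: "(\<And>j. j < n \<Longrightarrow> x j = y j) \<Longrightarrow> mvs {..<n} M x i = mvs {..<n} M y i"
  by (simp add: mvs_def)

lemma mvs_sum: "mvs S M (\<lambda>l. \<Sum>j\<in>J. f j l) i = (\<Sum>j\<in>J. mvs S M (f j) i)"
  unfolding mvs_def by (simp add: sum_distrib_left sum.swap[of _ J])

lemma mvs_mmul: "mvs {..<k} M (\<lambda>l. mvs S N x l) i = mvs S (mmul k M N) x i"
  unfolding mvs_def mmul_def
  by (simp add: sum_distrib_left sum_distrib_right mult.assoc sum.swap[of _ S])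

lemma mvs_zero_extend:
  assumes "\<Gamma> \<subseteq> {..<m}"
  shows "mvs {..<m} M (\<lambda>j. if j \<in> \<Gamma> then x j else 0) i = mvs \<Gamma> M x i"
proof -
  have "mvs {..<m} M (\<lambda>j. if j \<in> \<Gamma> then x j else 0) i = (\<Sum>j\<in>{..<m} \<inter> \<Gamma>. M i j * x j)"
    unfolding mvs_def by (simp add: sum.inter_restrict if_distrib cong: if_cong)
  also have "{..<m} \<inter> \<Gamma> = \<Gamma>"
    using assms by blast
  finally show ?thesis by (simp add: mvs_def)
qed

lemma mmul_assoc: "mmul k (mmul k' X Y) Z = mmul k' X (mmul k Y Z)"
  unfolding mmul_def
  by (intro ext) (simp add: sum_distrib_left sum_distrib_right mult.assoc sum.swap[of _ "{..<k}"])

lemma mvs_mpow_0: "i < n \<Longrightarrow> mvs {..<n} (mpow n A 0) x i = x i"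
  by (simp add: mvs_def if_distrib if_distribR cong: if_cong)

lemma mmul_mpow_0: "i < n \<Longrightarrow> mmul n (mpow n A 0) M i j = M i j"
  by (simp add: mmul_def if_distrib if_distribR cong: if_cong)

lemma sum_fun_apply: "sum f S x = (\<Sum>l\<in>S. f l x)"
  by (induction S rule: infinite_finite_induct) auto

context
  fixes A B C D :: "nat \<Rightarrow> nat \<Rightarrow> real" and n m :: nat
begin

lemma state_lincomb:
  "state A B n m (\<lambda>i. a * x i + b * x' i) (\<lambda>\<tau> j. a * u \<tau> j + b * u' \<tau> j) k =
     (\<lambda>i. a * state A B n m x u k i + b * state A B n m x' u' k i)"
  by (induction k) (simp_all add: mvs_lincomb algebra_simps)

lemma outp_lincomb:
  "outp A B C D n m (\<lambda>i. a * x i + b * x' i) (\<lambda>\<tau> j. a * u \<tau> j + b * u' \<tau> j) k i =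
     a * outp A B C D n m x u k i + b * outp A B C D n m x' u' k i"
  by (simp add: outp_def state_lincomb mvs_lincomb algebra_simps)

lemma outp_zero: "outp A B C D n m (\<lambda>_. 0) (\<lambda>_ _. 0) k i = 0"
  using outp_lincomb[where a = 0 and b = 0] by simp

lemma state_Suc_shift:
  "state A B n m x u (Suc k) = state A B n m (state A B n m x u 1) (\<lambda>\<tau>. u (Suc \<tau>)) k"
  by (induction k) simp_all

lemma outp_Suc_shift:
  "outp A B C D n m x u (Suc k) i = outp A B C D n m (state A B n m x u 1) (\<lambda>\<tau>. u (Suc \<tau>)) k i"
  unfolding outp_def by (simp only: state_Suc_shift)

lemma state_vec_trunc: "i < n \<Longrightarrow> state A B n m (vec_trunc n x) u k i = state A B n m x u k i"
proof (induction k arbitrary: i)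
  case (Suc k)
  then show ?case
    using mvs_cong[of n "state A B n m (vec_trunc n x) u k" "state A B n m x u k"] by simp
qed (simp add: vec_trunc_def)

lemma outp_vec_trunc: "outp A B C D n m (vec_trunc n x) u k i = outp A B C D n m x u k i"
  unfolding outp_def using mvs_cong[OF state_vec_trunc] by simp

lemma state_eq_mpow_sum:
  "i < n \<Longrightarrow> state A B n m x u k i =
     mvs {..<n} (mpow n A k) x i + (\<Sum>j<k. mvs {..<m} (mmul n (mpow n A (k - Suc j)) B) (u j) i)"
proof (induction k arbitrary: i)
  case 0
  then show ?case by (simp del: mpow.simps add: mvs_mpow_0)
next
  case (Suc k)
  let ?input_part = "\<lambda>l. \<Sum>j<k. mvs {..<m} (mmul n (mpow n A (k - Suc j)) B) (u j) l"
  have "mvs {..<n} A (state A B n m x u k) i =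
      mvs {..<n} A (\<lambda>l. mvs {..<n} (mpow n A k) x l + ?input_part l) i"
    by (rule mvs_cong) (simp add: Suc.IH)
  also have "\<dots> = mvs {..<n} (mpow n A (Suc k)) x i +
      (\<Sum>j<k. mvs {..<m} (mmul n (mpow n A (Suc k - Suc j)) B) (u j) i)"
  proof -
    have "mpow n A (Suc k - Suc j) = mmul n A (mpow n A (k - Suc j))" if "j < k" for j
      using that by (metis Suc_diff_Suc diff_Suc_Suc mpow.simps(2))
    then show ?thesis
      using mvs_lincomb[of "{..<n}" A 1 "\<lambda>l. mvs {..<n} (mpow n A k) x l" 1 ?input_part i]
      by (simp add: mvs_sum mvs_mmul mmul_assoc)
  qed
  also have "mvs {..<m} B (u k) i = mvs {..<m} (mmul n (mpow n A (Suc k - Suc k)) B) (u k) i"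
    using Suc.prems by (simp del: mpow.simps add: mvs_def mmul_mpow_0)
  ultimately show ?case by simp
qed

lemma outp_eq_blocks:
  assumes "k < n"
  shows "outp A B C D n m x u k i =
    mvs {..<n} (obs_block n A C k) x i + (\<Sum>j<n. mvs {..<m} (toep_block n A B C D k j) (u j) i)"
proof -
  let ?input_part = "\<lambda>l. \<Sum>j<k. mvs {..<m} (mmul n (mpow n A (k - Suc j)) B) (u j) l"
  have "mvs {..<n} C (state A B n m x u k) i =
      mvs {..<n} C (\<lambda>l. mvs {..<n} (mpow n A k) x l + ?input_part l) i"
    by (rule mvs_cong) (simp add: state_eq_mpow_sum)
  also have "\<dots> = mvs {..<n} (obs_block n A C k) x i +
      (\<Sum>j<k. mvs {..<m} (mmul n C (mmul n (mpow n A (k - Suc j)) B)) (u j) i)"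
    using mvs_lincomb[of "{..<n}" C 1 "\<lambda>l. mvs {..<n} (mpow n A k) x l" 1 ?input_part i]
    by (simp add: mvs_sum mvs_mmul obs_block_def)
  moreover have "(\<Sum>j<n. mvs {..<m} (toep_block n A B C D k j) (u j) i) =
      (\<Sum>j<Suc k. mvs {..<m} (toep_block n A B C D k j) (u j) i)"
    by (rule sum.mono_neutral_right) (use assms in \<open>auto simp: toep_block_def mvs_def\<close>)
  ultimately show ?thesis
    by (simp add: outp_def toep_block_def)
qed

lemma stacked_eq_iff_outp:
  assumes "\<Gamma> \<subseteq> {..<m}"
  shows "stacked_eq n A B C D y t \<Gamma> \<Theta> xh U \<longleftrightarrow>
    (\<forall>k<n. \<forall>i\<in>\<Theta>. y (Suc t - n + k) i = outp A B C D n m xh (\<lambda>j l. if l \<in> \<Gamma> then U j l else 0) k i)"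
  by (simp add: stacked_eq_def outp_eq_blocks mvs_zero_extend[OF assms])

(* The k-step weakly unobservable subspace of the subsystem with inputs \<Gamma> and outputs \<Theta>;
   R^n is embedded in nat \<Rightarrow> real as the functions vanishing from n on. *)
definition weakly_unobservable :: "nat set \<Rightarrow> nat set \<Rightarrow> nat \<Rightarrow> (nat \<Rightarrow> real) set" where
  "weakly_unobservable \<Gamma> \<Theta> k = {z. (\<forall>i\<ge>n. z i = 0) \<and>
     (\<exists>u. supported_in \<Gamma> u \<and> (\<forall>\<tau><k. \<forall>i\<in>\<Theta>. outp A B C D n m z u \<tau> i = 0))}"

lemma weakly_unobservable_subspace: "real_fun.subspace (weakly_unobservable \<Gamma> \<Theta> k)"
proof (rule real_fun.subspaceI)
  show "0 \<in> weakly_unobservable \<Gamma> \<Theta> k"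
    unfolding weakly_unobservable_def zero_fun_def
    using outp_zero by (auto intro!: exI[of _ "\<lambda>_ _. 0"])
next
  fix x y
  assume "x \<in> weakly_unobservable \<Gamma> \<Theta> k" "y \<in> weakly_unobservable \<Gamma> \<Theta> k"
  then obtain u v where "\<forall>i\<ge>n. x i = 0" "supported_in \<Gamma> u" "\<forall>\<tau><k. \<forall>i\<in>\<Theta>. outp A B C D n m x u \<tau> i = 0"
    and "\<forall>i\<ge>n. y i = 0" "supported_in \<Gamma> v" "\<forall>\<tau><k. \<forall>i\<in>\<Theta>. outp A B C D n m y v \<tau> i = 0"
    unfolding weakly_unobservable_def by blast
  then show "x + y \<in> weakly_unobservable \<Gamma> \<Theta> k"
    unfolding weakly_unobservable_def plus_fun_def
    using outp_lincomb[where a = 1 and b = 1 and u = u and u' = v]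
    by (auto intro!: exI[of _ "\<lambda>\<tau> j. u \<tau> j + v \<tau> j"])
next
  fix c x
  assume "x \<in> weakly_unobservable \<Gamma> \<Theta> k"
  then obtain u where "\<forall>i\<ge>n. x i = 0" "supported_in \<Gamma> u" "\<forall>\<tau><k. \<forall>i\<in>\<Theta>. outp A B C D n m x u \<tau> i = 0"
    unfolding weakly_unobservable_def by blast
  then show "(\<lambda>i. c * x i) \<in> weakly_unobservable \<Gamma> \<Theta> k"
    unfolding weakly_unobservable_def
    using outp_lincomb[where a = c and b = 0 and u = u]
    by (auto intro!: exI[of _ "\<lambda>\<tau> j. c * u \<tau> j"])
qed

lemma weakly_unobservable_antimono:
  assumes "k \<le> k'"
  shows "weakly_unobservable \<Gamma> \<Theta> k' \<subseteq> weakly_unobservable \<Gamma> \<Theta> k"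
proof
  fix z
  assume "z \<in> weakly_unobservable \<Gamma> \<Theta> k'"
  then obtain u where "\<forall>i\<ge>n. z i = 0" "supported_in \<Gamma> u"
      "\<forall>\<tau><k'. \<forall>i\<in>\<Theta>. outp A B C D n m z u \<tau> i = 0"
    unfolding weakly_unobservable_def by blast
  with assms show "z \<in> weakly_unobservable \<Gamma> \<Theta> k"
    unfolding weakly_unobservable_def by (auto intro!: exI[of _ u])
qed

lemma weakly_unobservable_0_subset_span:
  "weakly_unobservable \<Gamma> \<Theta> 0 \<subseteq> real_fun.span ((\<lambda>l i. if i = l then 1 else 0) ` {..<n})"
proof
  fix z
  assume "z \<in> weakly_unobservable \<Gamma> \<Theta> 0"
  then have "z = (\<Sum>l<n. (\<lambda>i. z l * (if i = l then 1 else 0)))"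
    by (auto simp: weakly_unobservable_def sum_fun_apply if_distrib not_less cong: if_cong)
  also have "\<dots> \<in> real_fun.span ((\<lambda>l i. if i = l then 1 else 0) ` {..<n})"
    by (intro real_fun.span_sum real_fun.span_scale real_fun.span_base) auto
  finally show "z \<in> real_fun.span ((\<lambda>l i. if i = l then 1 else 0) ` {..<n})" .
qed

(* W (Suc k) depends on W k only, so a stationary step makes the chain stationary. *)
lemma weakly_unobservable_Suc_iff:
  "z \<in> weakly_unobservable \<Gamma> \<Theta> (Suc k) \<longleftrightarrow> (\<forall>i\<ge>n. z i = 0) \<and>
     (\<exists>v. (\<forall>j. j \<notin> \<Gamma> \<longrightarrow> v j = 0) \<and>
        (\<forall>i\<in>\<Theta>. mvs {..<n} C z i + mvs {..<m} D v i = 0) \<and>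
        vec_trunc n (\<lambda>i. mvs {..<n} A z i + mvs {..<m} B v i) \<in> weakly_unobservable \<Gamma> \<Theta> k)"
  (is "_ \<longleftrightarrow> ?z_vanishes \<and> (\<exists>v. ?P v)")
proof
  assume "z \<in> weakly_unobservable \<Gamma> \<Theta> (Suc k)"
  then obtain u where z: ?z_vanishes and u: "supported_in \<Gamma> u"
    and out: "\<forall>\<tau><Suc k. \<forall>i\<in>\<Theta>. outp A B C D n m z u \<tau> i = 0"
    unfolding weakly_unobservable_def by blast
  have "\<forall>\<tau><k. \<forall>i\<in>\<Theta>. outp A B C D n m (vec_trunc n (state A B n m z u 1)) (\<lambda>\<tau>. u (Suc \<tau>)) \<tau> i = 0"
    using out by (simp only: outp_vec_trunc outp_Suc_shift[symmetric]) simp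
  with u have "?P (u 0)"
    using out by (auto simp: weakly_unobservable_def outp_def vec_trunc_def intro!: exI[of _ "\<lambda>\<tau>. u (Suc \<tau>)"])
  with z show "?z_vanishes \<and> (\<exists>v. ?P v)" by blast
next
  assume "?z_vanishes \<and> (\<exists>v. ?P v)"
  then obtain v u where z: ?z_vanishes and v: "\<forall>j. j \<notin> \<Gamma> \<longrightarrow> v j = 0"
    and out0: "\<forall>i\<in>\<Theta>. mvs {..<n} C z i + mvs {..<m} D v i = 0"
    and u: "supported_in \<Gamma> u"
    and out: "\<forall>\<tau><k. \<forall>i\<in>\<Theta>.
       outp A B C D n m (vec_trunc n (\<lambda>i. mvs {..<n} A z i + mvs {..<m} B v i)) u \<tau> i = 0"
    unfolding weakly_unobservable_def by blast
  have "\<forall>\<tau><Suc k. \<forall>i\<in>\<Theta>. outp A B C D n m z (case_nat v u) \<tau> i = 0"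
  proof (intro allI impI ballI)
    fix \<tau> i
    assume "\<tau> < Suc k" "i \<in> \<Theta>"
    show "outp A B C D n m z (case_nat v u) \<tau> i = 0"
    proof (cases \<tau>)
      case 0
      with out0 \<open>i \<in> \<Theta>\<close> show ?thesis by (simp add: outp_def)
    next
      case (Suc \<tau>')
      then have "outp A B C D n m z (case_nat v u) \<tau> i =
          outp A B C D n m (vec_trunc n (\<lambda>i. mvs {..<n} A z i + mvs {..<m} B v i)) u \<tau>' i"
        by (simp only: outp_Suc_shift outp_vec_trunc) simp
      with out Suc \<open>\<tau> < Suc k\<close> \<open>i \<in> \<Theta>\<close> show ?thesis by simp
    qed
  qed
  moreover have "supported_in \<Gamma> (case_nat v u)"
    using u v by (simp split: nat.split)
  ultimately show "z \<in> weakly_unobservable \<Gamma> \<Theta> (Suc k)"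
    unfolding weakly_unobservable_def using z by blast
qed

lemma weakly_unobservable_stable:
  assumes "weakly_unobservable \<Gamma> \<Theta> (Suc k) = weakly_unobservable \<Gamma> \<Theta> k" "k \<le> j"
  shows "weakly_unobservable \<Gamma> \<Theta> j = weakly_unobservable \<Gamma> \<Theta> k"
proof -
  have "weakly_unobservable \<Gamma> \<Theta> (Suc j) = weakly_unobservable \<Gamma> \<Theta> j" if "k \<le> j" for j
    using that
  proof (induction rule: dec_induct)
    case (step j)
    then show ?case
      by (simp add: set_eq_iff weakly_unobservable_Suc_iff[of _ _ _ "Suc j"] weakly_unobservable_Suc_iff[of _ _ _ j])
  qed (fact assms(1))
  with assms(2) show ?thesis
    by (induction rule: dec_induct) simp_all
qed

lemma strongly_observable_sub_n_steps:
  assumes "strongly_observable_sub A B C D n m \<Gamma> \<Theta>" "supported_in \<Gamma> u"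
    and "\<forall>k<n. \<forall>i\<in>\<Theta>. outp A B C D n m z u k i = 0"
  shows "\<forall>i<n. z i = 0"
proof -
  let ?W = "weakly_unobservable \<Gamma> \<Theta>"
  have "\<exists>\<tau>. \<forall>z' u'. supported_in \<Gamma> u' \<longrightarrow>
      (\<forall>k\<le>\<tau>. \<forall>i\<in>\<Theta>. outp A B C D n m z' u' k i = 0) \<longrightarrow> (\<forall>i<n. z' i = 0)"
    using assms(1)[unfolded strongly_observable_sub_def, rule_format, of "\<lambda>_ _. 0" "\<lambda>_. 0"]
    by (simp add: outp_zero)
  then obtain \<tau> where \<tau>: "\<And>z' u'. supported_in \<Gamma> u' \<Longrightarrow>
      \<forall>k\<le>\<tau>. \<forall>i\<in>\<Theta>. outp A B C D n m z' u' k i = 0 \<Longrightarrow> \<forall>i<n. z' i = 0"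
    by blast
  let ?E = "(\<lambda>l i. if i = l then 1 else 0 :: real) ` {..<n}"
  have "\<exists>k\<le>card ?E. ?W (Suc k) = ?W k"
    by (rule real_fun.decreasing_subspace_chain_stabilizes)
      (simp_all add: weakly_unobservable_subspace weakly_unobservable_antimono
        weakly_unobservable_0_subset_span)
  moreover have "card ?E \<le> n"
    using card_image_le[of "{..<n}"] by simp
  ultimately obtain k where "k \<le> n" "?W (Suc k) = ?W k"
    using order_trans by blast
  have "vec_trunc n z \<in> ?W n"
    using assms(2,3) unfolding weakly_unobservable_def by (auto simp: vec_trunc_def outp_vec_trunc)
  also have "?W n = ?W (max n (Suc \<tau>))"
    using weakly_unobservable_stable \<open>k \<le> n\<close> \<open>?W (Suc k) = ?W k\<close> by (metis max.coboundedI1)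
  also have "\<dots> \<subseteq> ?W (Suc \<tau>)"
    by (simp add: weakly_unobservable_antimono)
  finally have "vec_trunc n z \<in> ?W (Suc \<tau>)" .
  then obtain u' where u': "supported_in \<Gamma> u'"
    and out: "\<forall>k<Suc \<tau>. \<forall>i\<in>\<Theta>. outp A B C D n m (vec_trunc n z) u' k i = 0"
    unfolding weakly_unobservable_def by blast
  have "\<forall>i<n. vec_trunc n z i = 0"
    by (rule \<tau>[OF u']) (use out in \<open>simp add: less_Suc_eq_le\<close>)
  then show ?thesis
    by (simp add: vec_trunc_def)
qed

lemma state_eq_trajectory:
  assumes "\<forall>\<tau>. \<forall>i<n. x (Suc \<tau>) i = mvs {..<n} A (x \<tau>) i + mvs {..<m} B (w \<tau>) i" "i < n"
  shows "x (t0 + k) i = state A B n m (x t0) (\<lambda>j. w (t0 + j)) k i"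
  using assms(2)
proof (induction k arbitrary: i)
  case (Suc k)
  then show ?case
    using assms(1) mvs_cong[of n "x (t0 + k)" "state A B n m (x t0) (\<lambda>j. w (t0 + j)) k"] by simp
qed simp

lemma output_eq_outp_plus_attack:
  assumes "\<forall>\<tau>. \<forall>i<n. x (Suc \<tau>) i = mvs {..<n} A (x \<tau>) i + mvs {..<m} B (w \<tau>) i"
    and "\<forall>\<tau>. \<forall>i<p. y \<tau> i = mvs {..<n} C (x \<tau>) i + mvs {..<m} D (w \<tau>) i + a \<tau> i" "i < p"
  shows "y (t0 + k) i = outp A B C D n m (x t0) (\<lambda>j. w (t0 + j)) k i + a (t0 + k) i"
proof -
  have "mvs {..<n} C (x (t0 + k)) i = mvs {..<n} C (state A B n m (x t0) (\<lambda>j. w (t0 + j)) k) i"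
    by (rule mvs_cong) (rule state_eq_trajectory[OF assms(1)])
  with assms(2,3) show ?thesis
    by (simp add: outp_def)
qed

end

lemma sparse_strongly_observable_union_diff:
  assumes "sparse_strongly_observable A B C D n m p (r1 + r2) (s1 + s2)"
    and "\<Gamma>1 \<subseteq> {..<m}" "card \<Gamma>1 \<le> r1" "\<Gamma>2 \<subseteq> {..<m}" "card \<Gamma>2 \<le> r2"
    and "\<Theta> \<subseteq> {..<p}" "p - s1 \<le> card \<Theta>" "finite \<Lambda>" "card \<Lambda> \<le> s2"
  shows "strongly_observable_sub A B C D n m (\<Gamma>1 \<union> \<Gamma>2) (\<Theta> - \<Lambda>)"
proof -
  have "card (\<Gamma>1 \<union> \<Gamma>2) \<le> r1 + r2"
    using card_Un_le[of \<Gamma>1 \<Gamma>2] assms(3,5) by linarith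
  moreover have "p - (s1 + s2) \<le> card (\<Theta> - \<Lambda>)"
    using diff_card_le_card_Diff[OF assms(8), of \<Theta>] assms(7,9) by linarith
  ultimately show ?thesis
    using assms(1)[unfolded sparse_strongly_observable_def, rule_format, of "\<Gamma>1 \<union> \<Gamma>2" "\<Theta> - \<Lambda>"]
      assms(2,4,6) by blast
qed

theorem proposition1:
  fixes A B C D :: "nat \<Rightarrow> nat \<Rightarrow> real"
    and n m p r s t :: nat
    and x w a y :: "nat \<Rightarrow> nat \<Rightarrow> real"
    and \<Gamma>u_star \<Lambda>_star \<Gamma>u \<Gamma>y :: "nat set"
    and xh :: "nat \<Rightarrow> real" and U :: "nat \<Rightarrow> nat \<Rightarrow> real"
  assumes dyn: "\<forall>\<tau>. \<forall>i<n. x (Suc \<tau>) i = mvs {..<n} A (x \<tau>) i + mvs {..<m} B (w \<tau>) i"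
    and out: "\<forall>\<tau>. \<forall>i<p. y \<tau> i = mvs {..<n} C (x \<tau>) i + mvs {..<m} D (w \<tau>) i + a \<tau> i"
    and w_supp: "\<Gamma>u_star \<subseteq> {..<m}" "card \<Gamma>u_star \<le> r" "\<forall>\<tau> j. j \<notin> \<Gamma>u_star \<longrightarrow> w \<tau> j = 0"
    and a_supp: "\<Lambda>_star \<subseteq> {..<p}" "card \<Lambda>_star \<le> s" "\<forall>\<tau> i. i \<notin> \<Lambda>_star \<longrightarrow> a \<tau> i = 0"
    and sso: "sparse_strongly_observable A B C D n m p (2 * r) (2 * s)"
    and t: "n - 1 \<le> t"
    and Gu: "\<Gamma>u \<subseteq> {..<m}" "card \<Gamma>u \<le> r"
    and Gy: "\<Gamma>y \<subseteq> {..<p}" "p - s \<le> card \<Gamma>y"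
    and eq: "stacked_eq n A B C D y t \<Gamma>u \<Gamma>y xh U"
  shows "\<forall>i<n. xh i = x (Suc t - n) i"
proof -
  define t0 where "t0 = Suc t - n"
  define ws where "ws = (\<lambda>j. w (t0 + j))"
  define U_ext where "U_ext = (\<lambda>j l. if l \<in> \<Gamma>u then U j l else 0)"
  have so: "strongly_observable_sub A B C D n m (\<Gamma>u \<union> \<Gamma>u_star) (\<Gamma>y - \<Lambda>_star)"
    using sparse_strongly_observable_union_diff[OF sso[unfolded mult_2] Gu w_supp(1,2) Gy
        finite_subset[OF a_supp(1)] a_supp(2)] by simp
  have zero_output: "outp A B C D n m (\<lambda>i. x t0 i - xh i) (\<lambda>\<tau> j. ws \<tau> j - U_ext \<tau> j) k i = 0"
    if "k < n" "i \<in> \<Gamma>y - \<Lambda>_star" for k i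
  proof -
    have "outp A B C D n m (x t0) ws k i = y (t0 + k) i"
      using output_eq_outp_plus_attack[OF dyn out] a_supp(3) Gy(1) that by (auto simp: ws_def)
    also have "\<dots> = outp A B C D n m xh U_ext k i"
      using eq[unfolded stacked_eq_iff_outp[OF Gu(1)]] that by (simp add: t0_def U_ext_def)
    finally show ?thesis
      using outp_lincomb[where a = 1 and b = "-1"] by simp
  qed
  have "supported_in (\<Gamma>u \<union> \<Gamma>u_star) (\<lambda>\<tau> j. ws \<tau> j - U_ext \<tau> j)"
    using w_supp(3) by (simp add: ws_def U_ext_def)
  then have "\<forall>i<n. x t0 i - xh i = 0"
    by (rule strongly_observable_sub_n_steps[OF so]) (simp add: zero_output)
  then show ?thesis
    by (simp add: t0_def)
qed

end
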